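(* Place the almost positive roots of type $C_n$ in the off-diagonal entries of an $(n+1)\times(n+1)$ array via the bijection: entry $(1,j)$ ($2\le j\le n+1$) is $-\alpha_{j-1}$; entry $(i,j)$ with $2\le i<j$ is $\varepsilon_{i-1}-\varepsilon_{j-1}$; entry $(i,j)$ with $i>j$ is $\varepsilon_j+\varepsilon_{i-1}$. Two almost positive roots $\alpha,\beta$ are $\underline c$-compatible if and only if their locations satisfy one of: (i) they lie in the same row or the same column; (ii) for some $k<m$, $i<j$ with $k,m,i,j$ pairwise distinct, they lie in entries $(k,i)$ and $(m,j)$, and either $k<i<m$ or $i<k<m<j$; (iii) for some $k<m$, $i<j$ with $k,m,i,j$ pairwise distinct, they lie in entries $(m,i)$ and $(k,j)$, and either ($k<i$ and $m<i$) or $i<k<j<m$ or $k>j$.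
   Context: Type $C_n$: standard basis $\varepsilon_i$ of $\mathbb{R}^n$, simple roots $\alpha_i=\varepsilon_i-\varepsilon_{i+1}$ ($i<n$), $\alpha_n=2\varepsilon_n$, $\Pi$ the simple roots, $\Phi_+=\{\varepsilon_i\pm\varepsilon_j:i<j\}\cup\{2\varepsilon_i\}$, $\Phi_{\ge-1}=\Phi_+\sqcup(-\Pi)$. With simple reflections $s_i$ and $c=s_1\cdots s_n$, $\tau:\Phi_{\ge-1}\to\Phi_{\ge-1}$ is $\tau(-\alpha_i)=s_1\cdots s_{i-1}(\alpha_i)$, $\tau(s_n\cdots s_{i+1}(\alpha_i))=-\alpha_i$, $\tau(\alpha)=c(\alpha)$ otherwise. The $\underline c$-compatibility degree $(-\|_{\underline c}-)$ is the unique $\tau$-invariant function $\Phi_{\ge-1}^2\to\mathbb{Z}$ with $(-\alpha\|_{\underline c}-\alpha')=0$ for $\alpha,\alpha'\in\Pi$ and $(-\alpha\|_{\underline c}\beta)=[\beta:\alpha]$ (coefficient of $\alpha$ in $\beta$) for $\alpha\in\Pi,\beta\in\Phi_+$; $\gamma,\gamma'$ are $\underline c$-compatible if $(\gamma\|_{\underline c}\gamma')=0$. *)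

theory Defs
  imports Main "HOL.Real"
begin

text \<open>Vectors of R^n are functions nat => real supported on {1..n};
  eps i is the standard basis vector epsilon_i.\<close>

type_synonym vec = "nat \<Rightarrow> real"

definition eps :: "nat \<Rightarrow> vec" where
  "eps i = (\<lambda>k. if k = i then 1 else 0)"

definition vadd :: "vec \<Rightarrow> vec \<Rightarrow> vec" where
  "vadd v w = (\<lambda>k. v k + w k)"

definition vsub :: "vec \<Rightarrow> vec \<Rightarrow> vec" where
  "vsub v w = (\<lambda>k. v k - w k)"

definition vneg :: "vec \<Rightarrow> vec" where
  "vneg v = (\<lambda>k. - v k)"

definition vscale :: "real \<Rightarrow> vec \<Rightarrow> vec" where
  "vscale c v = (\<lambda>k. c * v k)"

definition inner_n :: "nat \<Rightarrow> vec \<Rightarrow> vec \<Rightarrow> real" where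
  "inner_n n v w = (\<Sum>k=1..n. v k * w k)"

definition alpha :: "nat \<Rightarrow> nat \<Rightarrow> vec" where
  "alpha n i = (if i < n then vsub (eps i) (eps (Suc i)) else vscale 2 (eps n))"

definition simple_roots :: "nat \<Rightarrow> vec set" where
  "simple_roots n = alpha n ` {1..n}"

definition pos_roots :: "nat \<Rightarrow> vec set" where
  "pos_roots n =
     {vsub (eps i) (eps j) | i j. 1 \<le> i \<and> i < j \<and> j \<le> n}
   \<union> {vadd (eps i) (eps j) | i j. 1 \<le> i \<and> i < j \<and> j \<le> n}
   \<union> {vscale 2 (eps i) | i. 1 \<le> i \<and> i \<le> n}"

definition apr :: "nat \<Rightarrow> vec set" where
  "apr n = pos_roots n \<union> vneg ` simple_roots n"

definition srefl :: "nat \<Rightarrow> nat \<Rightarrow> vec \<Rightarrow> vec" where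
  "srefl n i v = vsub v (vscale (2 * inner_n n v (alpha n i) / inner_n n (alpha n i) (alpha n i)) (alpha n i))"

definition sword :: "nat \<Rightarrow> nat list \<Rightarrow> vec \<Rightarrow> vec" where
  "sword n w v = foldr (srefl n) w v"

definition cox :: "nat \<Rightarrow> vec \<Rightarrow> vec" where
  "cox n v = sword n [1..<Suc n] v"

definition tau :: "nat \<Rightarrow> vec \<Rightarrow> vec" where
  "tau n b =
    (if \<exists>i\<in>{1..n}. b = vneg (alpha n i)
     then (let i = (THE i. i \<in> {1..n} \<and> b = vneg (alpha n i)) in sword n [1..<i] (alpha n i))
     else if \<exists>i\<in>{1..n}. b = sword n (rev [Suc i..<Suc n]) (alpha n i)
     then (let i = (THE i. i \<in> {1..n} \<and> b = sword n (rev [Suc i..<Suc n]) (alpha n i)) in vneg (alpha n i))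
     else cox n b)"

definition scoeff :: "nat \<Rightarrow> vec \<Rightarrow> nat \<Rightarrow> real" where
  "scoeff n b i = (THE c. (\<forall>k. k \<notin> {1..n} \<longrightarrow> c k = 0) \<and>
                          b = (\<lambda>t. \<Sum>k=1..n. c k * alpha n k t)) i"

definition is_cdeg :: "nat \<Rightarrow> (vec \<Rightarrow> vec \<Rightarrow> int) \<Rightarrow> bool" where
  "is_cdeg n f \<longleftrightarrow>
     (\<forall>a b. (a \<notin> apr n \<or> b \<notin> apr n) \<longrightarrow> f a b = 0) \<and>
     (\<forall>a\<in>apr n. \<forall>b\<in>apr n. f (tau n a) (tau n b) = f a b) \<and>
     (\<forall>i\<in>{1..n}. \<forall>j\<in>{1..n}. f (vneg (alpha n i)) (vneg (alpha n j)) = 0) \<and>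
     (\<forall>i\<in>{1..n}. \<forall>b\<in>pos_roots n. real_of_int (f (vneg (alpha n i)) b) = scoeff n b i)"

definition cdeg :: "nat \<Rightarrow> vec \<Rightarrow> vec \<Rightarrow> int" where
  "cdeg n = (THE f. is_cdeg n f)"

definition compatible :: "nat \<Rightarrow> vec \<Rightarrow> vec \<Rightarrow> bool" where
  "compatible n a b \<longleftrightarrow> cdeg n a b = 0"

definition loc :: "nat \<Rightarrow> nat \<Rightarrow> nat \<Rightarrow> vec" where
  "loc n i j =
    (if i = 1 then vneg (alpha n (j - 1))
     else if i < j then vsub (eps (i - 1)) (eps (j - 1))
     else vadd (eps j) (eps (i - 1)))"

definition is_entry :: "nat \<Rightarrow> nat \<times> nat \<Rightarrow> bool" where
  "is_entry n p \<longleftrightarrow> 1 \<le> fst p \<and> fst p \<le> Suc n \<and> 1 \<le> snd p \<and> snd p \<le> Suc n \<and> fst p \<noteq> snd p"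

definition same_line :: "nat \<times> nat \<Rightarrow> nat \<times> nat \<Rightarrow> bool" where
  "same_line p q \<longleftrightarrow> fst p = fst q \<or> snd p = snd q"

definition cond_ii :: "nat \<times> nat \<Rightarrow> nat \<times> nat \<Rightarrow> bool" where
  "cond_ii p q \<longleftrightarrow> (\<exists>k m i j. k < m \<and> i < j \<and> distinct [k, m, i, j] \<and>
      ((p = (k, i) \<and> q = (m, j)) \<or> (p = (m, j) \<and> q = (k, i))) \<and>
      ((k < i \<and> i < m) \<or> (i < k \<and> k < m \<and> m < j)))"

definition cond_iii :: "nat \<times> nat \<Rightarrow> nat \<times> nat \<Rightarrow> bool" where
  "cond_iii p q \<longleftrightarrow> (\<exists>k m i j. k < m \<and> i < j \<and> distinct [k, m, i, j] \<and>
      ((p = (m, i) \<and> q = (k, j)) \<or> (p = (k, j) \<and> q = (m, i))) \<and>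
      ((k < i \<and> m < i) \<or> (i < k \<and> k < j \<and> j < m) \<or> k > j))"

end

theory Submission
  imports Defs
begin

text \<open>
  In the array, \<tau> acts as the simultaneous cyclic shift x \<mapsto> x + 1 mod (n + 1) of row and
  column index: the three cases of its definition are row 1 (sent to row 2), row n + 1
  (sent to row 1) and the rows in between, on which the Coxeter element
  (v_1, ..., v_n) \<mapsto> (-v_n, v_1, ..., v_(n-1)) shifts the indices of \<epsilon>_i \<plusminus> \<epsilon>_j.
  Since every row reaches row 1, the negative simple roots, a \<tau>-invariant function is
  determined by its restriction to pairs whose first entry lies there; this gives uniqueness
  of the compatibility degree. For existence we write it down explicitly as a function of
  positions: read the second root in the cyclic order of indices starting at the row of the
  first, and take the coefficient of the corresponding simple root, a partial sum of
  coordinates. Its zeros, translated back to the linear order of indices, are the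
  conditions (i)--(iii).
\<close>

section \<open>Simple reflections and the Coxeter element\<close>

lemma inner_n_eps: "inner_n n v (eps i) = (if 1 \<le> i \<and> i \<le> n then v i else 0)"
  unfolding inner_n_def eps_def by (simp add: if_distrib cong: if_cong)

lemma inner_n_vsub: "inner_n n v (vsub w w') = inner_n n v w - inner_n n v w'"
  unfolding inner_n_def vsub_def by (simp add: right_diff_distrib sum_subtractf)

lemma inner_n_vscale: "inner_n n v (vscale c w) = c * inner_n n v w"
  unfolding inner_n_def vscale_def by (simp add: sum_distrib_left ac_simps)

lemma inner_n_alpha_less: "1 \<le> i \<Longrightarrow> i < n \<Longrightarrow> inner_n n v (alpha n i) = v i - v (Suc i)"
  by (simp add: alpha_def inner_n_vsub inner_n_eps)

lemma inner_n_alpha_last: "1 \<le> n \<Longrightarrow> inner_n n v (alpha n n) = 2 * v n"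
  by (simp add: alpha_def inner_n_vscale inner_n_eps)

lemma srefl_less:
  "1 \<le> i \<Longrightarrow> i < n \<Longrightarrow>
    srefl n i v = (\<lambda>k. if k = i then v (Suc i) else if k = Suc i then v i else v k)"
  by (simp add: srefl_def inner_n_alpha_less)
    (auto simp: alpha_def vsub_def vscale_def eps_def field_simps intro!: ext)

lemma srefl_last: "1 \<le> n \<Longrightarrow> srefl n n v = (\<lambda>k. if k = n then - v n else v k)"
  by (simp add: srefl_def inner_n_alpha_last)
    (auto simp: alpha_def vsub_def vscale_def eps_def intro!: ext)

lemma sword_upt:
  assumes "1 \<le> a" "a \<le> b" "b \<le> n"
  shows "sword n [a..<b] v =
    (\<lambda>k. if k = a then v b else if a < k \<and> k \<le> b then v (k - 1) else v k)"
  using assms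
proof (induction b arbitrary: v)
  case (Suc b)
  show ?case
  proof (cases "a = Suc b")
    case False
    then have "a \<le> b"
      using Suc.prems by simp
    then have "sword n [a..<Suc b] v = sword n [a..<b] (srefl n b v)"
      by (simp add: sword_def)
    also have "\<dots> = (\<lambda>k. if k = a then srefl n b v b
        else if a < k \<and> k \<le> b then srefl n b v (k - 1) else srefl n b v k)"
      using Suc \<open>a \<le> b\<close> by simp
    finally show ?thesis
      using Suc.prems \<open>a \<le> b\<close> by (auto simp: srefl_less intro!: ext)
  qed (auto simp: sword_def)
qed simp

lemma sword_rev_upt:
  assumes "1 \<le> a" "a \<le> b" "b \<le> n"
  shows "sword n (rev [a..<b]) v =
    (\<lambda>k. if k = b then v a else if a \<le> k \<and> k < b then v (Suc k) else v k)"
  using assms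
proof (induction b arbitrary: v)
  case (Suc b)
  show ?case
  proof (cases "a = Suc b")
    case False
    then have "a \<le> b"
      using Suc.prems by simp
    then have "sword n (rev [a..<Suc b]) v = srefl n b (sword n (rev [a..<b]) v)"
      by (simp add: sword_def)
    also have "\<dots> = srefl n b (\<lambda>k. if k = b then v a else if a \<le> k \<and> k < b then v (Suc k) else v k)"
      using Suc \<open>a \<le> b\<close> by simp
    finally show ?thesis
      using Suc.prems \<open>a \<le> b\<close> by (auto simp: srefl_less intro!: ext)
  qed (auto simp: sword_def)
qed simp

lemma cox_apply:
  assumes "1 \<le> n"
  shows "cox n v = (\<lambda>k. if k = 1 then - v n else if 1 < k \<and> k \<le> n then v (k - 1) else v k)"
proof -
  have "cox n v = sword n [1..<n] (srefl n n v)"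
    using assms by (simp add: cox_def sword_def)
  then show ?thesis
    using assms by (auto simp: sword_upt srefl_last intro!: ext)
qed

lemma cox_vsub: "1 \<le> n \<Longrightarrow> cox n (vsub v w) = vsub (cox n v) (cox n w)"
  by (auto simp: cox_apply vsub_def intro!: ext)

lemma cox_vadd: "1 \<le> n \<Longrightarrow> cox n (vadd v w) = vadd (cox n v) (cox n w)"
  by (auto simp: cox_apply vadd_def intro!: ext)

lemma cox_eps_less: "1 \<le> k \<Longrightarrow> k < n \<Longrightarrow> cox n (eps k) = eps (Suc k)"
  by (auto simp: cox_apply eps_def intro!: ext)

lemma cox_eps_last: "1 \<le> n \<Longrightarrow> cox n (eps n) = vneg (eps 1)"
  by (auto simp: cox_apply eps_def vneg_def intro!: ext)

section \<open>The array of almost positive roots\<close>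

(* Row 1 is written Suc 0, the simp normal form of 1 :: nat, so that these rules fire. *)
lemma loc_first_row: "loc n (Suc 0) (Suc i) = vneg (alpha n i)"
  by (simp add: loc_def)

lemma loc_first_row_apply:
  "2 \<le> j \<Longrightarrow> j \<le> n \<Longrightarrow> loc n (Suc 0) j = (\<lambda>x. if x = j - 1 then -1 else if x = j then 1 else 0)"
  by (auto simp: loc_def alpha_def vneg_def vsub_def eps_def intro!: ext)

lemma loc_corner_apply: "loc n (Suc 0) (Suc n) = (\<lambda>x. if x = n then -2 else 0)"
  by (auto simp: loc_def alpha_def vneg_def vscale_def eps_def intro!: ext)

lemma loc_upper_apply:
  "2 \<le> i \<Longrightarrow> i < j \<Longrightarrow> loc n i j = (\<lambda>x. of_bool (x = i - 1) - of_bool (x = j - 1))"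
  by (auto simp: loc_def vsub_def eps_def intro!: ext)

lemma loc_lower_apply:
  "2 \<le> i \<Longrightarrow> j < i \<Longrightarrow> loc n i j = (\<lambda>x. of_bool (x = j) + of_bool (x = i - 1))"
  by (auto simp: loc_def vadd_def eps_def intro!: ext)

lemma is_entry_cases:
  assumes "is_entry n (i, j)"
  obtains (first_row) "i = 1" "2 \<le> j" "j \<le> n"
    | (corner) "i = 1" "j = Suc n"
    | (upper) "2 \<le> i" "i < j" "j \<le> Suc n"
    | (lower) "2 \<le> i" "j < i" "1 \<le> j" "i \<le> Suc n"
  using assms unfolding is_entry_def by force

lemma loc_vanishes_outside: "is_entry n (i, j) \<Longrightarrow> t \<notin> {1..n} \<Longrightarrow> loc n i j t = 0"
  by (cases rule: is_entry_cases)
    (auto simp: loc_first_row_apply loc_corner_apply loc_upper_apply loc_lower_apply is_entry_def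
      split: if_splits)

(* An entry is recovered from the support of its root and the set of its negative coordinates. *)
lemma loc_inj:
  assumes "is_entry n (i, j)" "is_entry n (i', j')" "loc n i j = loc n i' j'"
  shows "i = i' \<and> j = j'"
proof -
  define supp where "supp v = {x. v x \<noteq> 0}" for v :: vec
  define negs where "negs v = {x. v x < 0}" for v :: vec
  have first_row: "supp (loc n (Suc 0) j) = {j - 1, j} \<and> negs (loc n (Suc 0) j) = {j - 1}"
    if "2 \<le> j" "j \<le> n" for j
    using that by (auto simp: supp_def negs_def loc_first_row_apply)
  have corner: "supp (loc n (Suc 0) (Suc n)) = {n} \<and> negs (loc n (Suc 0) (Suc n)) = {n}"
    by (auto simp: supp_def negs_def loc_corner_apply)
  have upper: "supp (loc n i j) = {i - 1, j - 1} \<and> negs (loc n i j) = {j - 1}"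
    if "2 \<le> i" "i < j" for i j
    using that by (auto simp: supp_def negs_def loc_upper_apply)
  have lower: "supp (loc n i j) = {j, i - 1} \<and> negs (loc n i j) = {}"
    if "2 \<le> i" "j < i" for i j
    using that by (auto simp: supp_def negs_def loc_lower_apply)
  have "supp (loc n i j) = supp (loc n i' j')" "negs (loc n i j) = negs (loc n i' j')"
    using assms(3) by simp_all
  then show ?thesis
    by (cases rule: is_entry_cases[OF assms(1)]; cases rule: is_entry_cases[OF assms(2)])
      (auto simp: first_row corner upper lower doubleton_eq_iff)
qed

lemma loc_in_pos_roots:
  assumes "is_entry n (i, j)" "2 \<le> i"
  shows "loc n i j \<in> pos_roots n"
proof -
  have range: "i \<le> Suc n" "1 \<le> j" "j \<le> Suc n" "i \<noteq> j"
    using assms(1) by (simp_all add: is_entry_def)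
  consider "i < j" | "j < i - 1" | "j = i - 1"
    using range by linarith
  then show ?thesis
  proof cases
    case 1
    then have "loc n i j = vsub (eps (i - 1)) (eps (j - 1))" "1 \<le> i - 1" "i - 1 < j - 1" "j - 1 \<le> n"
      using assms(2) range by (simp_all add: loc_def)
    then show ?thesis
      unfolding pos_roots_def by blast
  next
    case 2
    then have "\<not> i < j"
      by linarith
    then have "loc n i j = vadd (eps j) (eps (i - 1))" "1 \<le> j" "j < i - 1" "i - 1 \<le> n"
      using assms(2) range 2 by (simp_all add: loc_def)
    then show ?thesis
      unfolding pos_roots_def by blast
  next
    case 3
    then have "loc n i j = vscale 2 (eps j)" "1 \<le> j" "j \<le> n"
      using assms(2) range by (auto simp: loc_def vadd_def vscale_def)
    then show ?thesis
      unfolding pos_roots_def by blast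
  qed
qed

lemma pos_roots_locE:
  assumes "x \<in> pos_roots n"
  obtains i j where "is_entry n (i, j)" "2 \<le> i" "x = loc n i j"
  using assms unfolding pos_roots_def
proof (elim UnE CollectE exE conjE)
  fix i j assume "x = vsub (eps i) (eps j)" "1 \<le> i" "i < j" "j \<le> n"
  then show ?thesis
    by (intro that[of "Suc i" "Suc j"]) (auto simp: is_entry_def loc_def)
next
  fix i j assume "x = vadd (eps i) (eps j)" "1 \<le> i" "i < j" "j \<le> n"
  then show ?thesis
    by (intro that[of "Suc j" i]) (auto simp: is_entry_def loc_def)
next
  fix i assume "x = vscale 2 (eps i)" "1 \<le> i" "i \<le> n"
  then show ?thesis
    by (intro that[of "Suc i" i]) (auto simp: is_entry_def loc_def vadd_def vscale_def)
qed

lemma loc_in_apr: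
  assumes "is_entry n (a, b)"
  shows "loc n a b \<in> apr n"
proof (cases "a = 1")
  case True
  then have "loc n a b = vneg (alpha n (b - 1))" "b - 1 \<in> {1..n}"
    using assms loc_first_row[of n "b - 1"] by (auto simp: is_entry_def)
  then show ?thesis
    unfolding apr_def simple_roots_def by blast
next
  case False
  then show ?thesis
    using assms loc_in_pos_roots[of n a b] by (auto simp: apr_def is_entry_def)
qed

lemma bij_betw_loc: "bij_betw (case_prod (loc n)) (Collect (is_entry n)) (apr n)"
proof (rule bij_betwI')
  fix p q :: "nat \<times> nat"
  assume "p \<in> Collect (is_entry n)" "q \<in> Collect (is_entry n)"
  then show "(case_prod (loc n) p = case_prod (loc n) q) = (p = q)"
    using loc_inj[of n "fst p" "snd p" "fst q" "snd q"] by (auto simp: case_prod_beta prod_eq_iff)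
next
  fix p :: "nat \<times> nat"
  assume "p \<in> Collect (is_entry n)"
  then show "case_prod (loc n) p \<in> apr n"
    using loc_in_apr[of n "fst p" "snd p"] by (simp add: case_prod_beta)
next
  fix x assume "x \<in> apr n"
  then consider "x \<in> pos_roots n" | i where "i \<in> {1..n}" "x = vneg (alpha n i)"
    unfolding apr_def simple_roots_def by blast
  then show "\<exists>p\<in>Collect (is_entry n). x = case_prod (loc n) p"
  proof cases
    case 1
    then show ?thesis
      by (metis pos_roots_locE mem_Collect_eq case_prod_conv)
  next
    case (2 i)
    then have "is_entry n (1, Suc i)" "x = loc n 1 (Suc i)"
      by (simp_all add: is_entry_def loc_first_row)
    then show ?thesis
      by force
  qed
qed

lemma apr_locE:
  assumes "x \<in> apr n"
  obtains a b where "is_entry n (a, b)" "x = loc n a b"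
  using assms unfolding bij_betw_imp_surj_on[OF bij_betw_loc, symmetric] by auto

section \<open>The action of \<open>\<tau>\<close> on the array\<close>

definition cyc_succ :: "nat \<Rightarrow> nat \<Rightarrow> nat" where
  "cyc_succ n x = (if x \<le> n then Suc x else 1)"

lemma cyc_succ_is_entry: "is_entry n (a, b) \<Longrightarrow> is_entry n (cyc_succ n a, cyc_succ n b)"
  unfolding is_entry_def cyc_succ_def by auto

lemma sword_upt_alpha:
  "1 \<le> i \<Longrightarrow> i \<le> n \<Longrightarrow> sword n [1..<i] (alpha n i) = loc n 2 (cyc_succ n (Suc i))"
  by (auto simp: sword_upt loc_upper_apply loc_lower_apply cyc_succ_def alpha_def vsub_def
      vscale_def eps_def intro!: ext)

lemma sword_rev_upt_alpha:
  assumes "1 \<le> i" "i \<le> n"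
  shows "sword n (rev [Suc i..<Suc n]) (alpha n i) = loc n (Suc n) i"
proof (cases "i = n")
  case True
  then show ?thesis
    using assms by (auto simp: sword_def loc_def alpha_def vadd_def vscale_def)
next
  case False
  then have "sword n (rev [Suc i..<Suc n]) (alpha n i) =
      srefl n n (sword n (rev [Suc i..<n]) (alpha n i))"
    using assms by (simp add: sword_def)
  also have "\<dots> = loc n (Suc n) i"
    using assms False
    by (auto simp: sword_rev_upt srefl_last loc_lower_apply alpha_def vsub_def eps_def intro!: ext)
  finally show ?thesis .
qed

lemma cox_loc:
  assumes "is_entry n (a, b)" "2 \<le> a" "a \<le> n"
  shows "cox n (loc n a b) = loc n (Suc a) (cyc_succ n b)"
proof -
  have range: "1 \<le> n" "1 \<le> b" "b \<le> Suc n" "a \<noteq> b"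
    using assms by (auto simp: is_entry_def)
  then consider "a < b" "b \<le> n" | "b = Suc n" | "b < a"
    by linarith
  then show ?thesis
  proof cases
    case 1
    then have "loc n a b = vsub (eps (a - 1)) (eps (b - 1))"
      using assms(2) by (simp add: loc_def)
    then show ?thesis
      using 1 assms(2) range by (simp add: cox_vsub cox_eps_less loc_def cyc_succ_def)
  next
    case 2
    then have "loc n a b = vsub (eps (a - 1)) (eps n)"
      using assms(2,3) by (simp add: loc_def)
    moreover have "vsub (eps a) (vneg (eps 1)) = vadd (eps 1) (eps a)"
      by (auto simp: vsub_def vadd_def vneg_def intro!: ext)
    ultimately show ?thesis
      using 2 assms(2,3) range
      by (simp add: cox_vsub cox_eps_less cox_eps_last loc_def cyc_succ_def)
  next
    case 3
    then have "loc n a b = vadd (eps b) (eps (a - 1))"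
      using assms(2) by (simp add: loc_def)
    then show ?thesis
      using 3 assms(2,3) range by (simp add: cox_vadd cox_eps_less loc_def cyc_succ_def)
  qed
qed

lemma loc_ne_neg_simple:
  assumes "is_entry n (a, b)" "a \<noteq> 1" "i \<in> {1..n}"
  shows "loc n a b \<noteq> vneg (alpha n i)"
  using loc_inj[OF assms(1), of 1 "Suc i"] assms by (auto simp: is_entry_def loc_first_row)

lemma loc_ne_sword_rev_upt_alpha:
  assumes "is_entry n (a, b)" "a \<noteq> Suc n" "i \<in> {1..n}"
  shows "loc n a b \<noteq> sword n (rev [Suc i..<Suc n]) (alpha n i)"
proof -
  have "is_entry n (Suc n, i)"
    using assms by (simp add: is_entry_def)
  then have "loc n a b \<noteq> loc n (Suc n) i"
    using loc_inj[OF assms(1)] assms(2) by blast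
  then show ?thesis
    using sword_rev_upt_alpha[of i n] assms(3) by simp
qed

lemma tau_neg_simple:
  assumes "i \<in> {1..n}"
  shows "tau n (vneg (alpha n i)) = sword n [1..<i] (alpha n i)"
proof -
  have "(THE k. k \<in> {1..n} \<and> vneg (alpha n i) = vneg (alpha n k)) = i"
  proof (rule the_equality)
    fix k assume "k \<in> {1..n} \<and> vneg (alpha n i) = vneg (alpha n k)"
    then show "k = i"
      using loc_inj[of n 1 "Suc i" 1 "Suc k"] assms by (auto simp: is_entry_def loc_first_row)
  qed (use assms in simp)
  then show ?thesis
    using assms by (auto simp: tau_def Let_def)
qed

lemma tau_last_row:
  assumes "i \<in> {1..n}"
  shows "tau n (loc n (Suc n) i) = vneg (alpha n i)"
proof -
  have entry: "is_entry n (Suc n, i)"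
    using assms by (simp add: is_entry_def)
  have not_neg: "\<not> (\<exists>k\<in>{1..n}. loc n (Suc n) i = vneg (alpha n k))"
    using loc_ne_neg_simple[OF entry] by simp
  have last: "\<exists>k\<in>{1..n}. loc n (Suc n) i = sword n (rev [Suc k..<Suc n]) (alpha n k)"
    using assms sword_rev_upt_alpha[of i n] by (metis atLeastAtMost_iff)
  have "(THE k. k \<in> {1..n} \<and> loc n (Suc n) i = sword n (rev [Suc k..<Suc n]) (alpha n k)) = i"
  proof (rule the_equality)
    fix k assume "k \<in> {1..n} \<and> loc n (Suc n) i = sword n (rev [Suc k..<Suc n]) (alpha n k)"
    then show "k = i"
      using loc_inj[of n "Suc n" i "Suc n" k] sword_rev_upt_alpha[of k n] assms
      by (auto simp: is_entry_def)
  qed (use assms sword_rev_upt_alpha[of i n] in simp)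
  then show ?thesis
    unfolding tau_def Let_def by (simp only: not_neg last if_True if_False)
qed

lemma tau_middle_rows:
  assumes "is_entry n (a, b)" "a \<noteq> 1" "a \<noteq> Suc n"
  shows "tau n (loc n a b) = cox n (loc n a b)"
  using loc_ne_neg_simple[OF assms(1,2)] loc_ne_sword_rev_upt_alpha[OF assms(1,3)]
  by (auto simp: tau_def)

lemma tau_loc:
  assumes "is_entry n (a, b)"
  shows "tau n (loc n a b) = loc n (cyc_succ n a) (cyc_succ n b)"
proof -
  have range: "1 \<le> a" "a \<le> Suc n" "1 \<le> b" "b \<le> Suc n" "a \<noteq> b"
    using assms by (simp_all add: is_entry_def)
  consider "a = 1" | "a = Suc n" | "2 \<le> a" "a \<le> n"
    using range by linarith
  then show ?thesis
  proof cases
    case 1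
    then have "loc n a b = vneg (alpha n (b - 1))" "b - 1 \<in> {1..n}"
      using range loc_first_row[of n "b - 1"] by auto
    then have "tau n (loc n a b) = sword n [1..<b - 1] (alpha n (b - 1))"
      by (simp add: tau_neg_simple)
    also have "\<dots> = loc n 2 (cyc_succ n b)"
      using sword_upt_alpha[of "b - 1" n] range 1 by (simp add: cyc_succ_def)
    finally show ?thesis
      using 1 range by (simp add: cyc_succ_def numeral_2_eq_2)
  next
    case 2
    then show ?thesis
      using range by (simp add: tau_last_row loc_first_row cyc_succ_def)
  next
    case 3
    then show ?thesis
      using assms by (simp add: tau_middle_rows cox_loc cyc_succ_def)
  qed
qed

section \<open>Coefficients in the basis of simple roots\<close>

(* Solving b = c\<^sub>1 \<alpha>\<^sub>1 + ... + c\<^sub>n \<alpha>\<^sub>n: the partial sum b\<^sub>1 + ... + b\<^sub>i telescopes to c\<^sub>i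
   for i < n and to 2 c\<^sub>n for i = n. *)
definition root_coeff :: "nat \<Rightarrow> vec \<Rightarrow> nat \<Rightarrow> real" where
  "root_coeff n b i = (if i < n then (\<Sum>t=1..i. b t) else (\<Sum>t=1..n. b t) / 2)"

lemma sum_alpha_apply:
  "(\<Sum>k=1..n. c k * alpha n k t) =
    (if 1 \<le> t \<and> t \<le> n
     then (if t < n then c t else 2 * c t) - (if 2 \<le> t then c (t - 1) else 0)
     else 0)"
proof -
  have "(\<Sum>k=1..n. c k * alpha n k t) =
      (\<Sum>k=1..n. (if k = t then c k * (if k < n then 1 else 2) else 0)
        - (if k = t - 1 then (if 2 \<le> t \<and> t \<le> n then c k else 0) else 0))"
    by (rule sum.cong) (auto simp: alpha_def vsub_def vscale_def eps_def)
  also have "\<dots> = (\<Sum>k=1..n. (if k = t then c k * (if k < n then 1 else 2) else 0))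
      - (\<Sum>k=1..n. (if k = t - 1 then (if 2 \<le> t \<and> t \<le> n then c k else 0) else 0))"
    by (rule sum_subtractf)
  also have "\<dots> = (if 1 \<le> t \<and> t \<le> n
      then (if t < n then c t else 2 * c t) - (if 2 \<le> t then c (t - 1) else 0)
      else 0)"
    by (simp add: sum.delta') auto
  finally show ?thesis .
qed

lemma partial_sum_alpha_expansion:
  assumes "1 \<le> j" "j \<le> n"
  shows "(\<Sum>t=1..j. \<Sum>k=1..n. c k * alpha n k t) = (if j < n then c j else 2 * c j)"
  using assms
proof (induction j)
  case (Suc j)
  then show ?case
    using sum_alpha_apply[where n = n and c = c and t = "Suc j"]
    by (cases "j = 0") (simp_all add: sum.cl_ivl_Suc)
qed simp

lemma root_coeff_alpha_expansion:
  "i \<in> {1..n} \<Longrightarrow> root_coeff n (\<lambda>t. \<Sum>k=1..n. c k * alpha n k t) i = c i"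
  using partial_sum_alpha_expansion[of i n c] partial_sum_alpha_expansion[of n n c]
  by (auto simp: root_coeff_def)

lemma alpha_expansion_root_coeff:
  assumes "\<And>t. t \<notin> {1..n} \<Longrightarrow> b t = 0"
  shows "(\<lambda>t. \<Sum>k=1..n. root_coeff n b k * alpha n k t) = b"
proof
  fix t
  have expand: "(\<Sum>k=1..n. root_coeff n b k * alpha n k t) =
      (if 1 \<le> t \<and> t \<le> n
       then (if t < n then root_coeff n b t else 2 * root_coeff n b t)
         - (if 2 \<le> t then root_coeff n b (t - 1) else 0)
       else 0)"
    by (rule sum_alpha_apply)
  show "(\<Sum>k=1..n. root_coeff n b k * alpha n k t) = b t"
  proof (cases "1 \<le> t \<and> t \<le> n")
    case True
    then have "(\<Sum>s=1..t. b s) = (\<Sum>s=1..t - 1. b s) + b t"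
      using sum.cl_ivl_Suc[of b 1 "t - 1"] by (cases t) auto
    then show ?thesis
      using True expand by (cases "t = 1") (auto simp: root_coeff_def)
  qed (use assms expand in auto)
qed

lemma scoeff_eq_root_coeff:
  assumes "\<And>t. t \<notin> {1..n} \<Longrightarrow> b t = 0" "i \<in> {1..n}"
  shows "scoeff n b i = root_coeff n b i"
proof -
  define c where "c k = (if k \<in> {1..n} then root_coeff n b k else 0)" for k
  have expansion: "(\<lambda>t. \<Sum>k=1..n. c k * alpha n k t) = b"
    using alpha_expansion_root_coeff[OF assms(1)] by (simp add: c_def)
  have "(THE c. (\<forall>k. k \<notin> {1..n} \<longrightarrow> c k = 0) \<and> b = (\<lambda>t. \<Sum>k=1..n. c k * alpha n k t)) = c"
  proof (rule the_equality)
    fix c'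
    assume c': "(\<forall>k. k \<notin> {1..n} \<longrightarrow> c' k = 0) \<and> b = (\<lambda>t. \<Sum>k=1..n. c' k * alpha n k t)"
    show "c' = c"
    proof
      fix k
      show "c' k = c k"
        using c' root_coeff_alpha_expansion[of k n c'] by (auto simp: c_def)
    qed
  qed (use expansion in \<open>simp add: c_def\<close>)
  then show ?thesis
    using assms(2) by (simp add: scoeff_def c_def)
qed

section \<open>The compatibility degree on the array\<close>

(* The position of x in the cyclic order a, a + 1, ..., n + 1, 1, ..., a - 1. *)
definition cyc_pos :: "nat \<Rightarrow> nat \<Rightarrow> nat \<Rightarrow> nat" where
  "cyc_pos n a x = (if a \<le> x then x - a + 1 else x + (n + 1) - a + 1)"

(* The degree of -\<alpha>\<^sub>j\<^sub>-\<^sub>1 = loc n 1 j against the root at entry (r, c): zero if that root is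
   negative simple (r = 1), otherwise the coefficient of \<alpha>\<^sub>j\<^sub>-\<^sub>1 in it. *)
definition first_row_deg :: "nat \<Rightarrow> nat \<Rightarrow> nat \<Rightarrow> nat \<Rightarrow> int" where
  "first_row_deg n j r c =
    (if r = 1 then 0
     else if r < c then (if j \<le> n then of_bool (r \<le> j) - of_bool (c \<le> j) else 0)
     else (if j \<le> n then of_bool (c < j) + of_bool (r \<le> j) else 1))"

definition entry_deg :: "nat \<Rightarrow> nat \<times> nat \<Rightarrow> nat \<times> nat \<Rightarrow> int" where
  "entry_deg n p q =
    first_row_deg n
      (cyc_pos n (fst p) (snd p)) (cyc_pos n (fst p) (fst q)) (cyc_pos n (fst p) (snd q))"

definition array_deg :: "nat \<Rightarrow> vec \<Rightarrow> vec \<Rightarrow> int" where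
  "array_deg n x y =
    (if x \<in> apr n \<and> y \<in> apr n
     then entry_deg n (inv_into (Collect (is_entry n)) (case_prod (loc n)) x)
                      (inv_into (Collect (is_entry n)) (case_prod (loc n)) y)
     else 0)"

lemma cyc_pos_cyc_succ:
  "1 \<le> a \<Longrightarrow> a \<le> Suc n \<Longrightarrow> 1 \<le> x \<Longrightarrow> x \<le> Suc n \<Longrightarrow>
    cyc_pos n (cyc_succ n a) (cyc_succ n x) = cyc_pos n a x"
  unfolding cyc_pos_def cyc_succ_def by auto

lemma entry_deg_cyc_succ:
  assumes "is_entry n (a, b)" "is_entry n (r, c)"
  shows "entry_deg n (cyc_succ n a, cyc_succ n b) (cyc_succ n r, cyc_succ n c) =
    entry_deg n (a, b) (r, c)"
  using assms unfolding entry_deg_def is_entry_def by (simp add: cyc_pos_cyc_succ)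

lemma entry_deg_first_row:
  "1 \<le> j \<Longrightarrow> 1 \<le> r \<Longrightarrow> 1 \<le> c \<Longrightarrow> entry_deg n (1, j) (r, c) = first_row_deg n j r c"
  unfolding entry_deg_def cyc_pos_def by simp

lemma first_row_deg_eq_root_coeff:
  assumes "is_entry n (r, c)" "2 \<le> r" "i \<in> {1..n}"
  shows "of_int (first_row_deg n (Suc i) r c) = root_coeff n (loc n r c) i"
proof -
  have range: "r \<le> Suc n" "1 \<le> c" "c \<le> Suc n" "r \<noteq> c"
    using assms(1) by (simp_all add: is_entry_def)
  have delta: "(\<Sum>t=1..m. if t = x then 1 else 0) = (if 1 \<le> x \<and> x \<le> m then 1 else 0 :: real)"
    for x m :: nat
    by (subst sum.delta) auto
  show ?thesis
  proof (cases "r < c")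
    case True
    then show ?thesis
      using assms(2,3) range
      by (auto simp: loc_upper_apply first_row_deg_def root_coeff_def of_bool_def
          sum_subtractf delta)
  next
    case False
    then show ?thesis
      using assms(2,3) range
      by (auto simp: loc_lower_apply first_row_deg_def root_coeff_def of_bool_def
          sum.distrib delta)
  qed
qed

lemma array_deg_loc:
  assumes "is_entry n (a, b)" "is_entry n (r, c)"
  shows "array_deg n (loc n a b) (loc n r c) = entry_deg n (a, b) (r, c)"
  using bij_betw_inv_into_left[OF bij_betw_loc, of "(a, b)"]
    bij_betw_inv_into_left[OF bij_betw_loc, of "(r, c)"] loc_in_apr assms
  by (simp add: array_deg_def)

lemma is_cdeg_array_deg: "is_cdeg n (array_deg n)"
  unfolding is_cdeg_def
proof (intro conjI ballI allI impI)
  fix x y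
  assume "x \<notin> apr n \<or> y \<notin> apr n"
  then show "array_deg n x y = 0"
    by (auto simp: array_deg_def)
next
  fix x y
  assume "x \<in> apr n" "y \<in> apr n"
  then obtain a b r c where "is_entry n (a, b)" "is_entry n (r, c)" "x = loc n a b" "y = loc n r c"
    by (metis apr_locE)
  then show "array_deg n (tau n x) (tau n y) = array_deg n x y"
    by (simp add: tau_loc array_deg_loc cyc_succ_is_entry entry_deg_cyc_succ)
next
  fix i j
  assume "i \<in> {1..n}" "j \<in> {1..n}"
  then show "array_deg n (vneg (alpha n i)) (vneg (alpha n j)) = 0"
    using array_deg_loc[of n 1 "Suc i" 1 "Suc j"] entry_deg_first_row[of "Suc i" 1 "Suc j" n]
    by (simp add: is_entry_def loc_first_row first_row_deg_def)
next
  fix i b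
  assume i: "i \<in> {1..n}" and b: "b \<in> pos_roots n"
  obtain r c where rc: "is_entry n (r, c)" "2 \<le> r" "b = loc n r c"
    using b by (rule pos_roots_locE)
  have "array_deg n (vneg (alpha n i)) b = first_row_deg n (Suc i) r c"
    using array_deg_loc[of n 1 "Suc i" r c] entry_deg_first_row[of "Suc i" r c n] i rc
    by (simp add: is_entry_def loc_first_row)
  also have "real_of_int \<dots> = root_coeff n b i"
    using first_row_deg_eq_root_coeff[OF rc(1,2) i] rc(3) by simp
  also have "\<dots> = scoeff n b i"
    using scoeff_eq_root_coeff[OF _ i] loc_vanishes_outside[OF rc(1)] rc(3) by metis
  finally show "real_of_int (array_deg n (vneg (alpha n i)) b) = scoeff n b i" .
qed

lemma cyc_succ_invariant_eqI:
  fixes F G :: "nat \<times> nat \<Rightarrow> nat \<times> nat \<Rightarrow> 'a"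
  assumes F_inv: "\<And>a b r c. is_entry n (a, b) \<Longrightarrow> is_entry n (r, c) \<Longrightarrow>
      F (cyc_succ n a, cyc_succ n b) (cyc_succ n r, cyc_succ n c) = F (a, b) (r, c)"
    and G_inv: "\<And>a b r c. is_entry n (a, b) \<Longrightarrow> is_entry n (r, c) \<Longrightarrow>
      G (cyc_succ n a, cyc_succ n b) (cyc_succ n r, cyc_succ n c) = G (a, b) (r, c)"
    and first_row: "\<And>b r c. is_entry n (1, b) \<Longrightarrow> is_entry n (r, c) \<Longrightarrow>
      F (1, b) (r, c) = G (1, b) (r, c)"
    and entries: "is_entry n (a, b)" "is_entry n (r, c)"
  shows "F (a, b) (r, c) = G (a, b) (r, c)"
proof -
  let ?row_eq = "\<lambda>a. \<forall>b r c. is_entry n (a, b) \<longrightarrow> is_entry n (r, c) \<longrightarrow>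
    F (a, b) (r, c) = G (a, b) (r, c)"
  have shift: "F (a, b) (r, c) = G (a, b) (r, c)"
    if "is_entry n (a, b)" "is_entry n (r, c)" "?row_eq (cyc_succ n a)" for a b r c
  proof -
    have "F (a, b) (r, c) = F (cyc_succ n a, cyc_succ n b) (cyc_succ n r, cyc_succ n c)"
      using F_inv that(1,2) by simp
    also have "\<dots> = G (cyc_succ n a, cyc_succ n b) (cyc_succ n r, cyc_succ n c)"
      using that cyc_succ_is_entry by blast
    also have "\<dots> = G (a, b) (r, c)"
      using G_inv that(1,2) by simp
    finally show ?thesis .
  qed
  have "?row_eq a" if "a \<le> Suc n" for a
    using that
  proof (induction a rule: inc_induct)
    case base
    have "?row_eq (cyc_succ n (Suc n))"
      using first_row by (simp add: cyc_succ_def)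
    then show ?case
      using shift by blast
  next
    case (step a)
    show ?case
    proof (cases "a = 1")
      case False
      then have "?row_eq (cyc_succ n a)"
        using step by (simp add: cyc_succ_def)
      then show ?thesis
        using shift by blast
    qed (use first_row in blast)
  qed
  then show ?thesis
    using entries by (simp add: is_entry_def)
qed

lemma is_cdeg_loc_cyc_succ:
  assumes "is_cdeg n f" "is_entry n (a, b)" "is_entry n (r, c)"
  shows "f (loc n (cyc_succ n a) (cyc_succ n b)) (loc n (cyc_succ n r) (cyc_succ n c)) =
    f (loc n a b) (loc n r c)"
proof -
  have "f (tau n (loc n a b)) (tau n (loc n r c)) = f (loc n a b) (loc n r c)"
    using assms loc_in_apr unfolding is_cdeg_def by blast
  then show ?thesis
    using assms(2,3) by (simp add: tau_loc)
qed

lemma is_cdeg_first_row_unique: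
  assumes f: "is_cdeg n f" and g: "is_cdeg n g" and "is_entry n (1, b)" "is_entry n (r, c)"
  shows "f (loc n 1 b) (loc n r c) = g (loc n 1 b) (loc n r c)"
proof -
  have neg: "loc n 1 b = vneg (alpha n (b - 1))" "b - 1 \<in> {1..n}"
    using assms(3) loc_first_row[of n "b - 1"] by (auto simp: is_entry_def)
  show ?thesis
  proof (cases "r = 1")
    case True
    then have "loc n r c = vneg (alpha n (c - 1))" "c - 1 \<in> {1..n}"
      using assms(4) loc_first_row[of n "c - 1"] by (auto simp: is_entry_def)
    then show ?thesis
      using f g neg by (simp add: is_cdeg_def)
  next
    case False
    then have "loc n r c \<in> pos_roots n"
      using assms(4) loc_in_pos_roots by (auto simp: is_entry_def)
    then have "real_of_int (h (vneg (alpha n (b - 1))) (loc n r c)) = scoeff n (loc n r c) (b - 1)"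
      if "is_cdeg n h" for h
      using that neg(2) unfolding is_cdeg_def by blast
    then show ?thesis
      using f g neg(1) by (metis of_int_eq_iff)
  qed
qed

lemma is_cdeg_unique:
  assumes f: "is_cdeg n f" and g: "is_cdeg n g"
  shows "f = g"
proof (intro ext)
  fix x y
  show "f x y = g x y"
  proof (cases "x \<in> apr n \<and> y \<in> apr n")
    case False
    then show ?thesis
      using f g by (simp add: is_cdeg_def)
  next
    case True
    then obtain a b r c where entries: "is_entry n (a, b)" "is_entry n (r, c)"
      and xy: "x = loc n a b" "y = loc n r c"
      by (metis apr_locE)
    have "f (case_prod (loc n) (a, b)) (case_prod (loc n) (r, c)) =
        g (case_prod (loc n) (a, b)) (case_prod (loc n) (r, c))"
      by (rule cyc_succ_invariant_eqI[OF _ _ _ entries])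
        (simp_all only: case_prod_conv is_cdeg_loc_cyc_succ[OF f] is_cdeg_loc_cyc_succ[OF g]
          is_cdeg_first_row_unique[OF f g])
    then show ?thesis
      by (simp add: xy)
  qed
qed

lemma cdeg_eq_array_deg: "cdeg n = array_deg n"
  unfolding cdeg_def using is_cdeg_array_deg is_cdeg_unique by blast

section \<open>Zeros of the compatibility degree\<close>

lemma first_row_deg_eq_0_iff:
  assumes "j \<le> Suc n" "1 \<le> r" "r \<le> Suc n" "c \<le> Suc n" "r \<noteq> c"
  shows "first_row_deg n j r c = 0 \<longleftrightarrow> r = 1 \<or> (r < c \<and> (j < r \<or> c \<le> j)) \<or> (c < r \<and> j \<le> c)"
  using assms unfolding first_row_deg_def by (auto simp: of_bool_def)

lemma cond_ii_iff:
  "cond_ii (a, b) (r, c) \<longleftrightarrow> a \<noteq> b \<and> a \<noteq> c \<and> r \<noteq> b \<and> r \<noteq> c \<and>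
    (a < r \<and> b < c \<and> (a < b \<and> b < r \<or> b < a \<and> a < r \<and> r < c) \<or>
     r < a \<and> c < b \<and> (r < c \<and> c < a \<or> c < r \<and> r < a \<and> a < b))"
  unfolding cond_ii_def by auto

lemma cond_iii_iff:
  "cond_iii (a, b) (r, c) \<longleftrightarrow> a \<noteq> b \<and> a \<noteq> c \<and> r \<noteq> b \<and> r \<noteq> c \<and>
    (r < a \<and> b < c \<and> (r < b \<and> a < b \<or> b < r \<and> r < c \<and> c < a \<or> c < r) \<or>
     a < r \<and> c < b \<and> (a < c \<and> r < c \<or> c < a \<and> a < b \<and> b < r \<or> b < a))"
  unfolding cond_iii_def by auto

lemma entry_deg_eq_0_iff:
  assumes "is_entry n (a, b)" "is_entry n (r, c)"
  shows "entry_deg n (a, b) (r, c) = 0 \<longleftrightarrow>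
    same_line (a, b) (r, c) \<or> cond_ii (a, b) (r, c) \<or> cond_iii (a, b) (r, c)"
proof -
  have "entry_deg n (a, b) (r, c) = 0 \<longleftrightarrow> cyc_pos n a r = 1 \<or>
      (cyc_pos n a r < cyc_pos n a c \<and>
        (cyc_pos n a b < cyc_pos n a r \<or> cyc_pos n a c \<le> cyc_pos n a b)) \<or>
      (cyc_pos n a c < cyc_pos n a r \<and> cyc_pos n a b \<le> cyc_pos n a c)"
    unfolding entry_deg_def fst_conv snd_conv
    by (rule first_row_deg_eq_0_iff) (use assms in \<open>auto simp: is_entry_def cyc_pos_def\<close>)
  also have "\<dots> \<longleftrightarrow> same_line (a, b) (r, c) \<or> cond_ii (a, b) (r, c) \<or> cond_iii (a, b) (r, c)"
    using assms unfolding cond_ii_iff cond_iii_iff same_line_def is_entry_def cyc_pos_def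
    by (cases rule: linorder_cases[of a r]; cases rule: linorder_cases[of b c]) auto
  finally show ?thesis .
qed

theorem theorem4p6:
  fixes n :: nat and p q :: "nat \<times> nat"
  assumes "1 \<le> n"
    and "is_entry n p" and "is_entry n q"
  shows "compatible n (loc n (fst p) (snd p)) (loc n (fst q) (snd q)) \<longleftrightarrow>
           (same_line p q \<or> cond_ii p q \<or> cond_iii p q)"
proof -
  obtain a b r c where p: "p = (a, b)" and q: "q = (r, c)"
    by (cases p, cases q)
  have entries: "is_entry n (a, b)" "is_entry n (r, c)"
    using assms(2,3) p q by simp_all
  have "compatible n (loc n a b) (loc n r c) \<longleftrightarrow> entry_deg n (a, b) (r, c) = 0"
    by (simp add: compatible_def cdeg_eq_array_deg array_deg_loc[OF entries])
  also have "\<dots> \<longleftrightarrow> same_line (a, b) (r, c) \<or> cond_ii (a, b) (r, c) \<or> cond_iii (a, b) (r, c)"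
    by (rule entry_deg_eq_0_iff[OF entries])
  finally show ?thesis
    using p q by simp
qed

end
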